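(* Let $0<s<1$ and let $\{\gamma_j\}_{j\in\mathbb N}$ be a non-increasing sequence with $1\ge\gamma_1$, $\gamma_j>0$ for all $j$, and $\lim_{j\to\infty}\gamma_j=0$. Then $$\lim_{\varepsilon\to0}\frac{d(\varepsilon)^{1-s}}{(\ln\varepsilon^{-1})^{s}}=0\quad\text{if and only if}\quad \lim_{j\to\infty}\frac{(\ln\frac1{\gamma_j})^{s}}{j^{1-s}}=\infty.$$
   Context: For $\varepsilon\in(0,1)$, $d(\varepsilon)=\max\{d\in\mathbb N:\gamma_d>\varepsilon^2\}$, with $d(\varepsilon)=0$ if $\gamma_1\le\varepsilon^2$. *)

theory Defs
  imports "HOL-Analysis.Analysis"
begin

text \<open>The sequence gamma is indexed by j = 1, 2, ...; the value gamma 0 is irrelevant.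
  d(eps) = max{d >= 1 : gamma_d > eps^2}, and 0 if gamma_1 <= eps^2.\<close>
definition d_eps :: "(nat \<Rightarrow> real) \<Rightarrow> real \<Rightarrow> nat" where
  "d_eps \<gamma> \<epsilon> = (if \<gamma> 1 \<le> \<epsilon>^2 then 0 else Max {d. 1 \<le> d \<and> \<gamma> d > \<epsilon>^2})"

end

theory Submission
  imports Defs
begin

text \<open>Both limits are equivalent to r(j) = j powr (1-s) / ln(1/gamma j) powr s tending to 0.
  For gamma j < 1 we have gamma j > (gamma j)^2, hence d(gamma j) >= j, so r(j) is dominated by
  the epsilon-quotient at epsilon = gamma j, which tends to 0. Conversely gamma(d(eps)) > eps^2
  gives ln(1/gamma(d(eps))) < 2 ln(1/eps), so the epsilon-quotient is at most 2 powr s * r(d(eps)),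
  and d(eps) tends to infinity as eps tends to 0 because every gamma j is positive.\<close>

lemma finite_d_eps_set:
  fixes \<gamma> :: "nat \<Rightarrow> real"
  assumes "\<gamma> \<longlonglongrightarrow> 0" and "\<epsilon> \<noteq> 0"
  shows "finite {d. 1 \<le> d \<and> \<gamma> d > \<epsilon>\<^sup>2}"
proof -
  obtain N where N: "\<And>n. n \<ge> N \<Longrightarrow> \<gamma> n < \<epsilon>\<^sup>2"
    using order_tendstoD(2)[OF assms(1), of "\<epsilon>\<^sup>2"] assms(2)
    by (auto simp: eventually_sequentially)
  have "{d. 1 \<le> d \<and> \<gamma> d > \<epsilon>\<^sup>2} \<subseteq> {..<N}"
    using N by (force simp: not_less[symmetric])
  then show ?thesis
    using finite_subset by blast
qed

lemma le_d_eps: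
  fixes \<gamma> :: "nat \<Rightarrow> real"
  assumes mono: "\<And>i j. 1 \<le> i \<Longrightarrow> i \<le> j \<Longrightarrow> \<gamma> j \<le> \<gamma> i"
    and "\<gamma> \<longlonglongrightarrow> 0" and "\<epsilon> \<noteq> 0" and "1 \<le> j" and "\<gamma> j > \<epsilon>\<^sup>2"
  shows "j \<le> d_eps \<gamma> \<epsilon>"
proof -
  have "\<gamma> 1 > \<epsilon>\<^sup>2"
    using mono[of 1 j] assms(4,5) by simp
  then have "d_eps \<gamma> \<epsilon> = Max {d. 1 \<le> d \<and> \<gamma> d > \<epsilon>\<^sup>2}"
    unfolding d_eps_def by simp
  then show ?thesis
    using Max_ge[OF finite_d_eps_set[OF assms(2,3)]] assms(4,5) by simp
qed

lemma d_eps_term_gt: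
  fixes \<gamma> :: "nat \<Rightarrow> real"
  assumes "\<gamma> \<longlonglongrightarrow> 0" and "\<epsilon> \<noteq> 0" and "1 \<le> d_eps \<gamma> \<epsilon>"
  shows "\<gamma> (d_eps \<gamma> \<epsilon>) > \<epsilon>\<^sup>2"
proof -
  have "\<gamma> 1 > \<epsilon>\<^sup>2"
    using assms(3) unfolding d_eps_def by (auto split: if_splits)
  then have "d_eps \<gamma> \<epsilon> = Max {d. 1 \<le> d \<and> \<gamma> d > \<epsilon>\<^sup>2}" and "{d. 1 \<le> d \<and> \<gamma> d > \<epsilon>\<^sup>2} \<noteq> {}"
    unfolding d_eps_def by auto
  then show ?thesis
    using Max_in[OF finite_d_eps_set[OF assms(1,2)]] by simp
qed

lemma filterlim_d_eps_at_top:
  fixes \<gamma> :: "nat \<Rightarrow> real"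
  assumes mono: "\<And>i j. 1 \<le> i \<Longrightarrow> i \<le> j \<Longrightarrow> \<gamma> j \<le> \<gamma> i"
    and pos: "\<And>j. 1 \<le> j \<Longrightarrow> \<gamma> j > 0"
    and "\<gamma> \<longlonglongrightarrow> 0"
  shows "filterlim (d_eps \<gamma>) at_top (at_right 0)"
  unfolding filterlim_at_top_ge[where c = 1]
proof (intro allI impI)
  fix J :: nat assume "1 \<le> J"
  have "0 < sqrt (\<gamma> J)"
    using pos[OF \<open>1 \<le> J\<close>] by simp
  moreover have "J \<le> d_eps \<gamma> \<epsilon>" if "0 < \<epsilon>" "\<epsilon> < sqrt (\<gamma> J)" for \<epsilon>
  proof (rule le_d_eps[OF mono assms(3)])
    have "\<epsilon>\<^sup>2 < (sqrt (\<gamma> J))\<^sup>2"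
      using that by (intro power_strict_mono) auto
    then show "\<gamma> J > \<epsilon>\<^sup>2"
      using pos[OF \<open>1 \<le> J\<close>] by simp
  qed (use that \<open>1 \<le> J\<close> in auto)
  ultimately show "eventually (\<lambda>\<epsilon>. J \<le> d_eps \<gamma> \<epsilon>) (at_right 0)"
    unfolding eventually_at_right_field by blast
qed

lemma ln_inverse_powr_le_of_square_less:
  fixes s x \<epsilon> :: real
  assumes "0 \<le> s" and "0 < \<epsilon>" and "\<epsilon>\<^sup>2 < x" and "x \<le> 1"
  shows "ln (1 / x) powr s \<le> 2 powr s * ln (1 / \<epsilon>) powr s"
proof -
  have "0 < x"
    using assms(3) by (smt (verit) zero_le_power2)
  have "ln (1 / x) < ln (1 / \<epsilon>\<^sup>2)"
    using assms \<open>0 < x\<close> by (simp add: field_simps)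
  also have "\<dots> = 2 * ln (1 / \<epsilon>)"
    using assms(2) by (simp add: ln_div ln_realpow)
  finally have less: "ln (1 / x) < 2 * ln (1 / \<epsilon>)" .
  have "ln (1 / x) powr s \<le> (2 * ln (1 / \<epsilon>)) powr s"
    using less assms \<open>0 < x\<close> by (intro powr_mono2) auto
  also have "\<dots> = 2 powr s * ln (1 / \<epsilon>) powr s"
    using less assms \<open>0 < x\<close> by (auto intro: powr_mult)
  finally show ?thesis .
qed

lemma tendsto_zero_seq_ratio_if_d_eps_ratio:
  fixes s t :: real and \<gamma> :: "nat \<Rightarrow> real"
  assumes "0 \<le> t"
    and mono: "\<And>i j. 1 \<le> i \<Longrightarrow> i \<le> j \<Longrightarrow> \<gamma> j \<le> \<gamma> i"
    and pos: "\<And>j. 1 \<le> j \<Longrightarrow> \<gamma> j > 0"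
    and lim: "\<gamma> \<longlonglongrightarrow> 0"
    and d_ratio: "((\<lambda>\<epsilon>. real (d_eps \<gamma> \<epsilon>) powr t / ln (1 / \<epsilon>) powr s) \<longlongrightarrow> 0) (at_right 0)"
  shows "((\<lambda>j. real j powr t / ln (1 / \<gamma> j) powr s) \<longlongrightarrow> 0) sequentially"
proof -
  have "filterlim \<gamma> (at_right 0) sequentially"
    unfolding filterlim_at using pos lim
    by (auto simp: eventually_sequentially intro!: exI[of _ 1] less_imp_neq[symmetric])
  then have upper_lim: "((\<lambda>j. real (d_eps \<gamma> (\<gamma> j)) powr t / ln (1 / \<gamma> j) powr s) \<longlongrightarrow> 0) sequentially"
    using filterlim_compose d_ratio by blast
  have "eventually (\<lambda>j. 1 \<le> j \<and> \<gamma> j < 1) sequentially"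
    using order_tendstoD(2)[OF lim zero_less_one] eventually_ge_at_top[of 1] by eventually_elim auto
  then have upper: "eventually (\<lambda>j. real j powr t / ln (1 / \<gamma> j) powr s
      \<le> real (d_eps \<gamma> (\<gamma> j)) powr t / ln (1 / \<gamma> j) powr s) sequentially"
  proof eventually_elim
    case (elim j)
    then have "(\<gamma> j)\<^sup>2 < \<gamma> j"
      using pos[of j] by (simp add: power2_eq_square)
    then have "j \<le> d_eps \<gamma> (\<gamma> j)"
      using le_d_eps[OF mono lim] pos[of j] elim by simp
    then show ?case
      using \<open>0 \<le> t\<close> by (intro divide_right_mono powr_mono2) auto
  qed
  show ?thesis
    by (rule tendsto_sandwich[OF _ upper tendsto_const upper_lim]) simp
qed

lemma tendsto_zero_d_eps_ratio_if_seq_ratio: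
  fixes s t :: real and \<gamma> :: "nat \<Rightarrow> real"
  assumes "0 \<le> s"
    and mono: "\<And>i j. 1 \<le> i \<Longrightarrow> i \<le> j \<Longrightarrow> \<gamma> j \<le> \<gamma> i"
    and pos: "\<And>j. 1 \<le> j \<Longrightarrow> \<gamma> j > 0"
    and lim: "\<gamma> \<longlonglongrightarrow> 0"
    and seq_ratio: "((\<lambda>j. real j powr t / ln (1 / \<gamma> j) powr s) \<longlongrightarrow> 0) sequentially"
  shows "((\<lambda>\<epsilon>. real (d_eps \<gamma> \<epsilon>) powr t / ln (1 / \<epsilon>) powr s) \<longlongrightarrow> 0) (at_right 0)"
proof -
  define d where "d = d_eps \<gamma>"
  have d_top: "filterlim d at_top (at_right 0)"
    unfolding d_def using filterlim_d_eps_at_top[OF mono pos lim] .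
  have upper_lim: "((\<lambda>\<epsilon>. 2 powr s * (real (d \<epsilon>) powr t / ln (1 / \<gamma> (d \<epsilon>)) powr s)) \<longlongrightarrow> 0)
      (at_right 0)"
    using tendsto_mult_right_zero[OF filterlim_compose[OF seq_ratio d_top]] by simp
  have "eventually (\<lambda>\<epsilon>. 1 \<le> d \<epsilon>) (at_right 0)"
    using d_top by (simp add: filterlim_at_top)
  moreover have "eventually (\<lambda>\<epsilon>. \<gamma> (d \<epsilon>) < 1) (at_right 0)"
    using order_tendstoD(2)[OF filterlim_compose[OF lim d_top]] by simp
  ultimately have upper: "eventually (\<lambda>\<epsilon>. real (d \<epsilon>) powr t / ln (1 / \<epsilon>) powr s
      \<le> 2 powr s * (real (d \<epsilon>) powr t / ln (1 / \<gamma> (d \<epsilon>)) powr s)) (at_right 0)"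
    using eventually_at_right_less
  proof eventually_elim
    case (elim \<epsilon>)
    define a where "a = ln (1 / \<gamma> (d \<epsilon>)) powr s"
    define L where "L = ln (1 / \<epsilon>) powr s"
    have "\<gamma> (d \<epsilon>) > \<epsilon>\<^sup>2"
      using d_eps_term_gt[OF lim] elim by (simp add: d_def)
    moreover have "\<gamma> (d \<epsilon>) > 0"
      using pos elim(1) by simp
    ultimately have "a \<le> 2 powr s * L" and "0 < a" and "\<epsilon>\<^sup>2 < 1"
      using ln_inverse_powr_le_of_square_less[OF \<open>0 \<le> s\<close> elim(3)] elim(2)
      by (auto simp: a_def L_def)
    then have "0 < L"
      using elim(3) by (simp add: L_def abs_square_less_1)
    have "real (d \<epsilon>) powr t / L \<le> real (d \<epsilon>) powr t / (a / 2 powr s)"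
      using \<open>a \<le> 2 powr s * L\<close> \<open>0 < a\<close> \<open>0 < L\<close>
      by (intro divide_left_mono) (auto simp: pos_divide_le_eq mult.commute)
    then show ?case
      by (simp add: a_def L_def mult.commute)
  qed
  have "((\<lambda>\<epsilon>. real (d \<epsilon>) powr t / ln (1 / \<epsilon>) powr s) \<longlongrightarrow> 0) (at_right 0)"
    by (rule tendsto_sandwich[OF _ upper tendsto_const upper_lim]) simp
  then show ?thesis
    by (simp add: d_def)
qed

theorem lemma3:
  fixes s :: real and \<gamma> :: "nat \<Rightarrow> real"
  assumes "0 < s" and "s < 1"
    and "\<And>i j. 1 \<le> i \<Longrightarrow> i \<le> j \<Longrightarrow> \<gamma> j \<le> \<gamma> i"
    and "\<gamma> 1 \<le> 1"
    and "\<And>j. 1 \<le> j \<Longrightarrow> \<gamma> j > 0"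
    and "\<gamma> \<longlonglongrightarrow> 0"
  shows "((\<lambda>\<epsilon>. real (d_eps \<gamma> \<epsilon>) powr (1 - s) / (ln (1 / \<epsilon>)) powr s) \<longlongrightarrow> 0) (at_right 0)
     \<longleftrightarrow> filterlim (\<lambda>j. (ln (1 / \<gamma> j)) powr s / real j powr (1 - s)) at_top sequentially"
proof -
  let ?ratio = "\<lambda>j. real j powr (1 - s) / ln (1 / \<gamma> j) powr s"
  have "eventually (\<lambda>j. 1 \<le> j \<and> \<gamma> j < 1) sequentially"
    using order_tendstoD(2)[OF assms(6) zero_less_one] eventually_ge_at_top[of 1] by eventually_elim auto
  then have "eventually (\<lambda>j. 0 < ?ratio j) sequentially"
    by eventually_elim (use assms(5) in simp)
  from filterlim_inverse_at_top_iff[OF this]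
  have "filterlim (\<lambda>j. ln (1 / \<gamma> j) powr s / real j powr (1 - s)) at_top sequentially
      \<longleftrightarrow> (?ratio \<longlongrightarrow> 0) sequentially"
    by simp
  moreover have "0 \<le> 1 - s" and "0 \<le> s"
    using assms(1,2) by simp_all
  ultimately show ?thesis
    using tendsto_zero_seq_ratio_if_d_eps_ratio[OF _ assms(3,5,6)]
      tendsto_zero_d_eps_ratio_if_seq_ratio[OF _ assms(3,5,6)] by blast
qed

end
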